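(* Let $E/\mathbb{Q}$ be the elliptic curve $y^2=x^3+a_4x+a_6$ with $a_4,a_6\in\mathbb{Z}$, let $(u,v)\in\mathbb{Z}^2$ be map-suitable for $E$, and suppose $-D_E(u,v)$ is a negative fundamental discriminant. Then: (1) For $P\in E(\mathbb{Q})\setminus\{\mathcal{O}\}$, the $\mathrm{SL}_2(\mathbb{Z})$-class in $\mathrm{CL}(-D_E(u,v))$ of the form $F_{P,\mu}$ depends only on $P$ and not on the choice of $\mu$; hence, setting $\Phi_{u,v}(\mathcal{O})$ to be the identity, this defines a map $\Phi_{u,v}:E(\mathbb{Q})\to\mathrm{CL}(-D_E(u,v))$. (2) If $P=(A/C^2,B/C^3)\neq\mathcal{O}$ and $\Phi_{u,v}(P)$ is the identity of $\mathrm{CL}(-D_E(u,v))$, then either $v\mid C$ or $\frac{va}{g^2}\ge d_E(u,v)$, where $a=Av+C^2u$ and $g=\gcd(C,v)$.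
   Context: For integers $u,v$ put $d_E(u,v):=v(u^3+a_4uv^2-a_6v^3)$ and $D_E(u,v):=4d_E(u,v)$. A pair $(u,v)\in\mathbb{Z}^2$ is map-suitable for $E$ if $u$, $v$, $3u^2+a_4v^2$ and $D_E(u,v)$ are all positive. Each $P\in E(\mathbb{Q})\setminus\{\mathcal{O}\}$ is written $P=(A/C^2,B/C^3)$ with $A,B,C\in\mathbb{Z}$, $C>0$, $\gcd(A,C)=\gcd(B,C)=1$; put $a=Av+C^2u$, $g=\gcd(C,v)$, and for an integer $\mu$ with $\frac{C^3}{g^2}\mu\equiv1\pmod{\frac{va}{g^2}}$ let $$F_{P,\mu}(x,y)=\frac{va}{g^2}x^2+2\mu\frac{Bv^2}{g^2}xy+\frac{\mu^2\frac{B^2v^4}{g^4}+d_E(u,v)}{\frac{va}{g^2}}y^2,$$ a positive definite integral form of discriminant $-D_E(u,v)$. $\mathrm{CL}(-D)$ is identified with the group of $\mathrm{SL}_2(\mathbb{Z})$-classes of primitive positive definite forms of discriminant $-D$. *)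

theory Defs
  imports Complex_Main "HOL-Computational_Algebra.Squarefree" "HOL-Number_Theory.Cong"
begin

definition nonsingular_curve :: "int \<Rightarrow> int \<Rightarrow> bool" where
  "nonsingular_curve a4 a6 \<longleftrightarrow> 4 * a4 ^ 3 + 27 * a6 ^ 2 \<noteq> 0"

definition on_curve :: "int \<Rightarrow> int \<Rightarrow> rat \<Rightarrow> rat \<Rightarrow> bool" where
  "on_curve a4 a6 x y \<longleftrightarrow> y ^ 2 = x ^ 3 + of_int a4 * x + of_int a6"

definition dE :: "int \<Rightarrow> int \<Rightarrow> int \<Rightarrow> int \<Rightarrow> int" where
  "dE a4 a6 u v = v * (u ^ 3 + a4 * u * v ^ 2 - a6 * v ^ 3)"

definition DE :: "int \<Rightarrow> int \<Rightarrow> int \<Rightarrow> int \<Rightarrow> int" where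
  "DE a4 a6 u v = 4 * dE a4 a6 u v"

definition map_suitable :: "int \<Rightarrow> int \<Rightarrow> int \<Rightarrow> int \<Rightarrow> bool" where
  "map_suitable a4 a6 u v \<longleftrightarrow>
     u > 0 \<and> v > 0 \<and> 3 * u ^ 2 + a4 * v ^ 2 > 0 \<and> DE a4 a6 u v > 0"

definition fundamental_discriminant :: "int \<Rightarrow> bool" where
  "fundamental_discriminant \<Delta> \<longleftrightarrow> \<Delta> \<noteq> 1 \<and>
     ((\<Delta> mod 4 = 1 \<and> squarefree \<Delta>) \<or>
      (\<Delta> mod 4 = 0 \<and> (\<Delta> div 4) mod 4 \<in> {2, 3} \<and> squarefree (\<Delta> div 4)))"

type_synonym bqf = "int \<times> int \<times> int"

definition bqf_eval :: "bqf \<Rightarrow> int \<Rightarrow> int \<Rightarrow> int" where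
  "bqf_eval f x y = (case f of (a, b, c) \<Rightarrow> a * x ^ 2 + b * x * y + c * y ^ 2)"

definition SL2_equiv :: "bqf \<Rightarrow> bqf \<Rightarrow> bool" where
  "SL2_equiv f f' \<longleftrightarrow> (\<exists>p q r s :: int. p * s - q * r = 1 \<and>
     (\<forall>x y. bqf_eval f' x y = bqf_eval f (p * x + q * y) (r * x + s * y)))"

text \<open>The form F_{P,mu} for P = (A/C^2, B/C^3); all divisions are exact.\<close>
definition F_form :: "int \<Rightarrow> int \<Rightarrow> int \<Rightarrow> int \<Rightarrow> int \<Rightarrow> int \<Rightarrow> int \<Rightarrow> int \<Rightarrow> bqf" where
  "F_form a4 a6 u v A B C \<mu> =
     (let a = A * v + C ^ 2 * u; g = gcd C v; lead = (v * a) div g ^ 2 in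
      (lead, 2 * \<mu> * ((B * v ^ 2) div g ^ 2),
       (\<mu> ^ 2 * ((B ^ 2 * v ^ 4) div g ^ 4) + dE a4 a6 u v) div lead))"

definition mu_admissible :: "int \<Rightarrow> int \<Rightarrow> int \<Rightarrow> int \<Rightarrow> int \<Rightarrow> bool" where
  "mu_admissible u v A C \<mu> \<longleftrightarrow>
     (let a = A * v + C ^ 2 * u; g = gcd C v in
      [(C ^ 3 div g ^ 2) * \<mu> = 1] (mod ((v * a) div g ^ 2)))"

definition principal_form :: "int \<Rightarrow> bqf" where
  "principal_form d = (1, 0, d)"

end

theory Submission
  imports Defs
begin

text \<open>Cancelling g = gcd C v turns F_{P,\<mu>} into [L, 2\<mu>\<beta>, (\<mu>^2\<beta>^2 + d)/L] with
  L = va/g^2 and \<beta> = Bv^2/g^2, and the curve equation makes L divide \<beta>^2 + dc^2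
  for c = C^3/g^2, the number that \<mu> inverts modulo L. So \<mu> is unique modulo L, and
  replacing \<mu> by \<mu> + kL is the substitution x \<mapsto> x + k\<beta>y. If the class is trivial, the
  form represents 1 at some (x, y), and then L = (Lx + \<mu>\<beta>y)^2 + dy^2: either y = 0 and
  L = 1, which gives v | C, or L \<ge> d.\<close>

definition sqrt_form :: "int \<Rightarrow> int \<Rightarrow> int \<Rightarrow> bqf" where
  "sqrt_form d a b = (a, 2 * b, (b ^ 2 + d) div a)"

lemma SL2_equiv_translate: "SL2_equiv (a, b, c) (a, b + 2 * a * k, a * k ^ 2 + b * k + c)"
  unfolding SL2_equiv_def
  by (intro exI[of _ 1] exI[of _ k] exI[of _ 0]) (simp add: bqf_eval_def algebra_simps power2_eq_square)

lemma sqrt_form_translate: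
  fixes a b d k :: int
  assumes "a \<noteq> 0" and "a dvd b ^ 2 + d"
  shows "SL2_equiv (sqrt_form d a b) (sqrt_form d a (b + a * k))"
proof -
  obtain c where c: "b ^ 2 + d = a * c"
    using assms(2) by blast
  have "(b + a * k) ^ 2 + d = a * (a * k ^ 2 + 2 * b * k + c)"
    using c by algebra
  then have "sqrt_form d a (b + a * k) = (a, 2 * b + 2 * a * k, a * k ^ 2 + 2 * b * k + c)"
    using assms(1) by (simp add: sqrt_form_def algebra_simps)
  moreover have "sqrt_form d a b = (a, 2 * b, c)"
    using assms(1) c by (simp add: sqrt_form_def)
  ultimately show ?thesis
    using SL2_equiv_translate[of a "2 * b" c k] by (simp add: mult.assoc)
qed

lemma SL2_equiv_principal_form_represents_1:
  assumes "SL2_equiv f (principal_form d)"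
  obtains x y where "bqf_eval f x y = 1"
proof -
  from assms obtain p q r s where
    "\<forall>x y. bqf_eval (principal_form d) x y = bqf_eval f (p * x + q * y) (r * x + s * y)"
    unfolding SL2_equiv_def by blast
  from this[rule_format, of 1 0] have "bqf_eval f p r = 1"
    by (simp add: bqf_eval_def principal_form_def)
  then show thesis by (rule that)
qed

lemma lead_coeff_eq_1_or_ge_if_represents_1:
  fixes a b c d x y :: int
  assumes "b ^ 2 + d = a * c" and "d > 0" and "bqf_eval (a, 2 * b, c) x y = 1"
  shows "a = 1 \<or> d \<le> a"
proof (cases "y = 0")
  case True
  then have "a * x ^ 2 = 1"
    using assms(3) by (simp add: bqf_eval_def)
  then show ?thesis
    by (smt (verit) zmult_eq_1_iff zero_le_power2)
next
  case False
  have "a = a * bqf_eval (a, 2 * b, c) x y"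
    using assms(3) by simp
  also have "\<dots> = (a * x + b * y) ^ 2 + d * y ^ 2"
    using assms(1) unfolding bqf_eval_def by algebra
  finally have "d * y ^ 2 \<le> a"
    by (metis le_add_same_cancel2 zero_le_power2)
  moreover have "1 \<le> y ^ 2"
    using False by (simp add: int_one_le_iff_zero_less)
  then have "d \<le> d * y ^ 2"
    using assms(2) by (simp add: mult_le_cancel_left1)
  ultimately show ?thesis by linarith
qed

lemma sqrt_form_equiv_principal_form:
  fixes a b d :: int
  assumes "d > 0" and "a dvd b ^ 2 + d" and "SL2_equiv (sqrt_form d a b) (principal_form d)"
  shows "a = 1 \<or> d \<le> a"
proof -
  obtain c where c: "b ^ 2 + d = a * c"
    using assms(2) by blast
  have "b ^ 2 + d > 0"
    using assms(1) by (simp add: add_nonneg_pos)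
  then have "a \<noteq> 0"
    using c by auto
  then have "sqrt_form d a b = (a, 2 * b, c)"
    using c by (simp add: sqrt_form_def)
  then obtain x y where "bqf_eval (a, 2 * b, c) x y = 1"
    using SL2_equiv_principal_form_represents_1 assms(3) by metis
  then show ?thesis
    using lead_coeff_eq_1_or_ge_if_represents_1 c assms(1) by blast
qed

lemma dvd_sqr_add_if_cong_inverse:
  fixes L c \<beta> d m :: int
  assumes "L dvd \<beta> ^ 2 + d * c ^ 2" and "[c * m = 1] (mod L)"
  shows "L dvd (m * \<beta>) ^ 2 + d" and "coprime c L"
proof -
  show cop: "coprime c L"
    using assms(2) by (metis cong_imp_coprime cong_sym coprime_1_left coprime_mult_left_iff)
  have "[(c * m) ^ 2 * \<beta> ^ 2 + d * c ^ 2 = 1 ^ 2 * \<beta> ^ 2 + d * c ^ 2] (mod L)"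
    by (intro cong_add cong_mult cong_pow cong_refl assms(2))
  then have "[c ^ 2 * ((m * \<beta>) ^ 2 + d) = \<beta> ^ 2 + d * c ^ 2] (mod L)"
    by (simp add: algebra_simps power_mult_distrib)
  then have "L dvd c ^ 2 * ((m * \<beta>) ^ 2 + d)"
    using assms(1) cong_dvd_iff by blast
  then show "L dvd (m * \<beta>) ^ 2 + d"
    using cop by (simp add: coprime_dvd_mult_right_iff coprime_commute)
qed

lemma sqrt_form_equiv_if_cong_inverse:
  fixes L c \<beta> d m m' :: int
  assumes "d > 0" and "L dvd \<beta> ^ 2 + d * c ^ 2"
    and "[c * m = 1] (mod L)" and "[c * m' = 1] (mod L)"
  shows "SL2_equiv (sqrt_form d L (m * \<beta>)) (sqrt_form d L (m' * \<beta>))"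
proof -
  note dvd = dvd_sqr_add_if_cong_inverse[OF assms(2,3)]
  have "(m * \<beta>) ^ 2 + d > 0"
    using assms(1) by (simp add: add_nonneg_pos)
  then have "L \<noteq> 0"
    using dvd(1) by auto
  have "[c * m' = c * m] (mod L)"
    using assms(3,4) cong_sym cong_trans by blast
  then have "[m' = m] (mod L)"
    using dvd(2) cong_mult_lcancel by blast
  then have "L dvd m' - m"
    by (simp add: cong_iff_dvd_diff)
  then obtain k where "m' = m + L * k"
    by (metis dvdE diff_add_cancel add.commute)
  then have "m' * \<beta> = m * \<beta> + L * (k * \<beta>)"
    by (simp add: algebra_simps)
  then show ?thesis
    using sqrt_form_translate[OF \<open>L \<noteq> 0\<close> dvd(1)] by simp
qed

lemma on_curve_int_eq:
  fixes A B C :: int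
  assumes "C > 0" and "on_curve a4 a6 (of_int A / of_int C ^ 2) (of_int B / of_int C ^ 3)"
  shows "B ^ 2 = A ^ 3 + a4 * A * C ^ 4 + a6 * C ^ 6"
proof -
  have "(of_int C :: rat) \<noteq> 0"
    using assms(1) by simp
  moreover have "(of_int B / of_int C ^ 3) ^ 2
      = (of_int A / of_int C ^ 2) ^ 3 + of_int a4 * (of_int A / of_int C ^ 2) + (of_int a6 :: rat)"
    using assms(2) by (simp add: on_curve_def)
  ultimately have "(of_int B :: rat) ^ 2 * of_int C ^ 8
      = (of_int A ^ 3 + of_int a4 * of_int A * of_int C ^ 4 + of_int a6 * of_int C ^ 6) * of_int C ^ 8"
    by (simp add: field_simps power_divide)
  then have "(of_int (B ^ 2) :: rat) = of_int (A ^ 3 + a4 * A * C ^ 4 + a6 * C ^ 6)"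
    using assms(1) by simp
  then show ?thesis
    by (simp only: of_int_eq_iff)
qed

lemma
  fixes A B C u v g v1 C1 :: int
  assumes g: "gcd C v = g" "g \<noteq> 0" and v: "v = g * v1" and C: "C = g * C1"
  shows F_form_cancel_gcd:
      "F_form a4 a6 u v A B C m
         = sqrt_form (dE a4 a6 u v) (v1 * (A * v1 + g * C1 ^ 2 * u)) (m * (B * v1 ^ 2))"
    and mu_admissible_cancel_gcd:
      "mu_admissible u v A C m \<longleftrightarrow> [(g * C1 ^ 3) * m = 1] (mod (v1 * (A * v1 + g * C1 ^ 2 * u)))"
    and lead_cancel_gcd:
      "(v * (A * v + C ^ 2 * u)) div g ^ 2 = v1 * (A * v1 + g * C1 ^ 2 * u)"
proof -
  have lead: "v * (A * v + C ^ 2 * u) = g ^ 2 * (v1 * (A * v1 + g * C1 ^ 2 * u))"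
    unfolding v C by (simp add: algebra_simps power2_eq_square)
  have mid: "B * v ^ 2 = g ^ 2 * (B * v1 ^ 2)"
    unfolding v by (simp add: algebra_simps power2_eq_square)
  have mid_sq: "B ^ 2 * v ^ 4 = g ^ 4 * (B * v1 ^ 2) ^ 2"
    unfolding v by (simp add: algebra_simps power2_eq_square power4_eq_xxxx)
  have cube: "C ^ 3 = g ^ 2 * (g * C1 ^ 3)"
    unfolding C by (simp add: algebra_simps power2_eq_square power3_eq_cube)
  show "(v * (A * v + C ^ 2 * u)) div g ^ 2 = v1 * (A * v1 + g * C1 ^ 2 * u)"
    using g(2) by (simp add: lead)
  show "F_form a4 a6 u v A B C m
      = sqrt_form (dE a4 a6 u v) (v1 * (A * v1 + g * C1 ^ 2 * u)) (m * (B * v1 ^ 2))"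
    using g by (simp add: F_form_def sqrt_form_def Let_def lead mid mid_sq power_mult_distrib)
  show "mu_admissible u v A C m \<longleftrightarrow> [(g * C1 ^ 3) * m = 1] (mod (v1 * (A * v1 + g * C1 ^ 2 * u)))"
    using g by (simp add: mu_admissible_def Let_def lead cube)
qed

lemma curve_norm_factor:
  fixes A B g v1 C1 u a4 a6 :: int
  assumes "B ^ 2 = A ^ 3 + a4 * A * (g * C1) ^ 4 + a6 * (g * C1) ^ 6"
  shows "(B * v1 ^ 2) ^ 2 + dE a4 a6 u (g * v1) * (g * C1 ^ 3) ^ 2
       = (v1 * (A * v1 + g * C1 ^ 2 * u))
         * (A ^ 2 * v1 ^ 2 - A * g * C1 ^ 2 * u * v1 + u ^ 2 * g ^ 2 * C1 ^ 4 + a4 * g ^ 4 * C1 ^ 4 * v1 ^ 2)"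
proof -
  have "(B * v1 ^ 2) ^ 2 = (A ^ 3 + a4 * A * (g * C1) ^ 4 + a6 * (g * C1) ^ 6) * v1 ^ 4"
    by (simp add: assms power_mult_distrib flip: power_mult)
  then show ?thesis
    unfolding dE_def by algebra
qed

lemma F_form_normal_form:
  fixes a4 a6 u v A B C :: int
  assumes "C > 0" and "on_curve a4 a6 (of_int A / of_int C ^ 2) (of_int B / of_int C ^ 3)"
  obtains L \<beta> c where
    "\<And>m. F_form a4 a6 u v A B C m = sqrt_form (dE a4 a6 u v) L (m * \<beta>)"
    "\<And>m. mu_admissible u v A C m \<longleftrightarrow> [c * m = 1] (mod L)"
    "L dvd \<beta> ^ 2 + dE a4 a6 u v * c ^ 2"
    "(v * (A * v + C ^ 2 * u)) div (gcd C v) ^ 2 = L"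
    "L = 1 \<Longrightarrow> v dvd C"
proof -
  define g where "g = gcd C v"
  define v1 where "v1 = v div g"
  define C1 where "C1 = C div g"
  define L where "L = v1 * (A * v1 + g * C1 ^ 2 * u)"
  have g0: "g \<noteq> 0"
    using assms(1) by (simp add: g_def)
  have v: "v = g * v1" and C: "C = g * C1"
    by (simp_all add: g_def v1_def C1_def)
  have "B ^ 2 = A ^ 3 + a4 * A * (g * C1) ^ 4 + a6 * (g * C1) ^ 6"
    using on_curve_int_eq[OF assms] C by simp
  from curve_norm_factor[OF this, of v1 u]
  have norm: "L dvd (B * v1 ^ 2) ^ 2 + dE a4 a6 u v * (g * C1 ^ 3) ^ 2"
    unfolding L_def v[symmetric] by (metis dvd_triv_left)
  have "v dvd C" if "L = 1"
  proof -
    have "is_unit v1"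
      using that unfolding L_def by (metis dvd_triv_left)
    then have "v dvd g"
      unfolding v by (simp add: mult_unit_dvd_iff)
    then show ?thesis
      unfolding g_def by (metis dvd_trans gcd_dvd1)
  qed
  then show thesis
    using that[of L "B * v1 ^ 2" "g * C1 ^ 3"] norm
      F_form_cancel_gcd[OF g_def[symmetric] g0 v C] mu_admissible_cancel_gcd[OF g_def[symmetric] g0 v C]
      lead_cancel_gcd[OF g_def[symmetric] g0 v C]
    unfolding L_def g_def by blast
qed

theorem theorem2p3:
  fixes a4 a6 u v :: int
  assumes E: "nonsingular_curve a4 a6"
    and suit: "map_suitable a4 a6 u v"
    and fund: "fundamental_discriminant (- DE a4 a6 u v)"
  shows "(\<forall>A B C \<mu> \<mu>'. C > 0 \<and> coprime A C \<and> coprime B C \<and>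
            on_curve a4 a6 (of_int A / of_int C ^ 2) (of_int B / of_int C ^ 3) \<and>
            mu_admissible u v A C \<mu> \<and> mu_admissible u v A C \<mu>' \<longrightarrow>
            SL2_equiv (F_form a4 a6 u v A B C \<mu>) (F_form a4 a6 u v A B C \<mu>'))
       \<and> (\<forall>A B C \<mu>. C > 0 \<and> coprime A C \<and> coprime B C \<and>
            on_curve a4 a6 (of_int A / of_int C ^ 2) (of_int B / of_int C ^ 3) \<and>
            mu_admissible u v A C \<mu> \<and>
            SL2_equiv (F_form a4 a6 u v A B C \<mu>) (principal_form (dE a4 a6 u v)) \<longrightarrow>
            v dvd C \<or> (v * (A * v + C ^ 2 * u)) div (gcd C v) ^ 2 \<ge> dE a4 a6 u v)"
proof -
  have d_pos: "dE a4 a6 u v > 0"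
    using suit by (simp add: map_suitable_def DE_def)
  have independent_of_mu:
    "SL2_equiv (F_form a4 a6 u v A B C \<mu>) (F_form a4 a6 u v A B C \<mu>')"
    if P: "C > 0" "on_curve a4 a6 (of_int A / of_int C ^ 2) (of_int B / of_int C ^ 3)"
      and adm: "mu_admissible u v A C \<mu>" "mu_admissible u v A C \<mu>'" for A B C \<mu> \<mu>'
  proof -
    obtain L \<beta> c where "\<And>m. F_form a4 a6 u v A B C m = sqrt_form (dE a4 a6 u v) L (m * \<beta>)"
      "\<And>m. mu_admissible u v A C m \<longleftrightarrow> [c * m = 1] (mod L)" "L dvd \<beta> ^ 2 + dE a4 a6 u v * c ^ 2"
      using F_form_normal_form[OF P] by metis
    then show ?thesis
      using sqrt_form_equiv_if_cong_inverse[OF d_pos] adm by simp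
  qed
  have trivial_class:
    "v dvd C \<or> (v * (A * v + C ^ 2 * u)) div (gcd C v) ^ 2 \<ge> dE a4 a6 u v"
    if P: "C > 0" "on_curve a4 a6 (of_int A / of_int C ^ 2) (of_int B / of_int C ^ 3)"
      and adm: "mu_admissible u v A C \<mu>"
      and principal: "SL2_equiv (F_form a4 a6 u v A B C \<mu>) (principal_form (dE a4 a6 u v))" for A B C \<mu>
  proof -
    obtain L \<beta> c where F: "F_form a4 a6 u v A B C \<mu> = sqrt_form (dE a4 a6 u v) L (\<mu> * \<beta>)"
      and inv: "[c * \<mu> = 1] (mod L)" and norm: "L dvd \<beta> ^ 2 + dE a4 a6 u v * c ^ 2"
      and lead: "(v * (A * v + C ^ 2 * u)) div (gcd C v) ^ 2 = L" and unit: "L = 1 \<Longrightarrow> v dvd C"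
      using F_form_normal_form[OF P] adm by metis
    have "L dvd (\<mu> * \<beta>) ^ 2 + dE a4 a6 u v"
      using dvd_sqr_add_if_cong_inverse(1)[OF norm inv] .
    then have "L = 1 \<or> dE a4 a6 u v \<le> L"
      using sqrt_form_equiv_principal_form[OF d_pos] principal unfolding F by blast
    then show ?thesis
      using unit lead by auto
  qed
  show ?thesis
    using independent_of_mu trivial_class by blast
qed

end
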